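(* Let $G=C_2^3\oplus C_4$ and let $U$ be a minimal zero-sum sequence over $G$ with $|U|=\mathsf D(G)=7$. Then $3\notin\mathsf L\big(U(-U)\big)$.
   Context: $C_n$ denotes a cyclic group of order $n$ and $C_2^r$ an elementary abelian $2$-group of rank $r$. For a finite abelian group $G$, a sequence over $G$ is an element of the free abelian monoid $\mathcal F(G)$ with basis $G$ (a finite unordered list of elements of $G$, repetitions allowed, written multiplicatively); its length $|S|$ is its number of terms; for $S=g_1\cdots g_\ell$, $-S=(-g_1)\cdots(-g_\ell)$. $\mathcal B(G)$ is the monoid of zero-sum sequences over $G$. A minimal zero-sum sequence (atom) is a nonempty zero-sum sequence that is not a product of two nonempty zero-sum sequences. For $B\in\mathcal B(G)$, $\mathsf L(B)=\{k\in\mathbb N_0: B \text{ is a product of } k \text{ atoms}\}$. The Davenport constant $\mathsf D(G)$ is the maximal length of an atom over $G$. *)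

theory Defs
  imports Main "HOL-Library.Multiset" "HOL-Library.Numeral_Type" "HOL-Library.Product_Plus"
begin

type_synonym G = "2 \<times> 2 \<times> 2 \<times> 4"

text \<open>Sequences over an abelian group are finite multisets; the product of sequences is
  multiset sum, and -S is the image under negation.\<close>
definition zero_sum :: "'a::ab_group_add multiset \<Rightarrow> bool" where
  "zero_sum S \<longleftrightarrow> sum_mset S = 0"

definition neg_seq :: "'a::ab_group_add multiset \<Rightarrow> 'a multiset" where
  "neg_seq S = image_mset uminus S"

definition atom :: "'a::ab_group_add multiset \<Rightarrow> bool" where
  "atom A \<longleftrightarrow> A \<noteq> {#} \<and> zero_sum A \<and>
     \<not> (\<exists>S T. S \<noteq> {#} \<and> T \<noteq> {#} \<and> zero_sum S \<and> zero_sum T \<and> A = S + T)"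

definition lengths :: "'a::ab_group_add multiset \<Rightarrow> nat set" where
  "lengths B = {k. \<exists>F :: 'a multiset multiset.
      (\<forall>A\<in>#F. atom A) \<and> sum_mset F = B \<and> size F = k}"

end

theory Submission
  imports Defs
begin

text \<open>Write a length-3 factorisation of \<open>U(-U)\<close> as \<open>W\<^sub>i = S\<^sub>i(-T\<^sub>i)\<close> with
  \<open>S\<^sub>1S\<^sub>2S\<^sub>3 = T\<^sub>1T\<^sub>2T\<^sub>3 = U\<close>; then \<open>\<sigma>(S\<^sub>i) = \<sigma>(T\<^sub>i)\<close>. In \<open>G\<close> every double \<open>2g\<close> lies in
  \<open>K = {0, z}\<close> with \<open>z = (0,0,0,2)\<close>, so each \<open>S\<^sub>iT\<^sub>i\<close> has sum \<open>2\<sigma>(S\<^sub>i) \<in> K\<close>.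

  If \<open>S\<^sub>i\<close> and \<open>T\<^sub>i\<close> share a term \<open>x\<close>, then \<open>W\<^sub>i = x(-x)\<close>, and as \<open>|U| \<noteq> 3\<close> the other two
  factors force \<open>S\<^sub>j = T\<^sub>k\<close>, \<open>S\<^sub>k = T\<^sub>j\<close>. So \<open>U = x S\<^sub>jS\<^sub>k\<close> with \<open>\<sigma>(S\<^sub>jS\<^sub>k) \<in> K\<close>, and minimality
  of \<open>U\<close> gives \<open>x = z\<close>. Removing \<open>z\<close> and one more term from \<open>U\<close> leaves 5 terms with no nonempty
  subsequence summing into \<open>K\<close>, i.e. a zero-sum free sequence of length 5 over \<open>G/K \<cong> C\<^sub>2\<^sup>4\<close>,
  whose \<open>2\<^sup>5\<close> subsums would be distinct in a group of order 16.

  If every \<open>S\<^sub>i\<close> is disjoint from \<open>T\<^sub>i\<close>, then \<open>S\<^sub>iT\<^sub>i\<close> divides \<open>U\<close>, so its complement in \<open>U\<close> has sum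
  in \<open>K\<close>; that complement is neither empty (\<open>S\<^sub>iT\<^sub>i = U\<close> would split \<open>W\<^sub>i\<close>) nor all of \<open>U\<close>, so its
  sum is \<open>z\<close>. The three complements together make up \<open>U\<close>, whence \<open>\<sigma>(U) = 3z = z \<noteq> 0\<close>.\<close>

lemma sum_mset_neg_seq [simp]: "sum_mset (neg_seq S) = - sum_mset S"
  unfolding neg_seq_def by (induction S) auto

lemma neg_seq_neg_seq [simp]: "neg_seq (neg_seq S) = S"
  unfolding neg_seq_def by (induction S) auto

lemma neg_seq_union: "neg_seq (S + T) = neg_seq S + neg_seq T"
  unfolding neg_seq_def by simp

lemma neg_seq_add_mset: "neg_seq (add_mset x S) = add_mset (- x) (neg_seq S)"
  unfolding neg_seq_def by simp

lemma neg_seq_eq_empty_iff [simp]: "neg_seq S = {#} \<longleftrightarrow> S = {#}"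
  unfolding neg_seq_def by simp

lemma size_neg_seq [simp]: "size (neg_seq S) = size S"
  unfolding neg_seq_def by simp

lemma atom_nonempty: "atom W \<Longrightarrow> W \<noteq> {#}"
  unfolding atom_def by simp

lemma atom_zero_sum: "atom W \<Longrightarrow> zero_sum W"
  unfolding atom_def by simp

lemma atom_split_trivial:
  assumes "atom W" "W = A + B" "zero_sum A" "zero_sum B"
  shows "A = {#} \<or> B = {#}"
  using assms unfolding atom_def by blast

lemma atom_neg_seq:
  assumes "atom A"
  shows "atom (neg_seq A)"
proof -
  have False if "neg_seq A = S + T" "S \<noteq> {#}" "T \<noteq> {#}" "zero_sum S" "zero_sum T" for S T
  proof -
    have "A = neg_seq S + neg_seq T"
      using arg_cong[OF that(1), of neg_seq] by (simp add: neg_seq_union)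
    from atom_split_trivial[OF assms this] show False
      using that(2-5) by (simp add: zero_sum_def)
  qed
  then show ?thesis using assms unfolding atom_def by (auto simp: zero_sum_def)
qed

lemma atom_zero_sum_subseteq:
  assumes "atom W" "R \<subseteq># W" "zero_sum R" "R \<noteq> {#}"
  shows "R = W"
proof -
  have W: "W = R + (W - R)" using assms(2) by simp
  have "zero_sum (W - R)"
    using assms(1-3) by (simp add: atom_def zero_sum_def sum_mset_diff)
  then have "W - R = {#}" using atom_split_trivial[OF assms(1) W assms(3)] assms(4) by blast
  then show ?thesis using W by simp
qed

lemma atom_common_element:
  assumes "atom (S + neg_seq T)" "x \<in># S" "x \<in># T"
  shows "S = {#x#} \<and> T = {#x#}"
proof -
  obtain S' T' where S: "S = add_mset x S'" and T: "T = add_mset x T'"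
    using assms(2,3) by (metis multi_member_split)
  have "{#x, -x#} \<subseteq># S + neg_seq T" by (simp add: S T neg_seq_add_mset)
  then have "{#x, -x#} = S + neg_seq T"
    using atom_zero_sum_subseteq[OF assms(1)] by (simp add: zero_sum_def)
  then have "size (S + neg_seq T) = size {#x, -x#}" by simp
  then have "size S' + size T' = 0" by (simp add: S T)
  then show ?thesis using S T by simp
qed

lemma union_eq_union_decompose:
  fixes A B X Y :: "'a multiset"
  assumes "A + B = X + Y"
  obtains X1 Y1 X2 Y2 where "A = X1 + Y1" "B = X2 + Y2" "X = X1 + X2" "Y = Y1 + Y2"
proof
  have count: "count A y + count B y = count X y + count Y y" for y
    using arg_cong[OF assms, of "\<lambda>M. count M y"] by simp
  show "A = (A \<inter># X) + (A - X)" "X = (A \<inter># X) + (X - A)"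
    by (rule multiset_eqI; simp)+
  show "B = (X - A) + (B - (X - A))"
  proof (rule multiset_eqI)
    show "count B y = count ((X - A) + (B - (X - A))) y" for y using count[of y] by simp
  qed
  show "Y = (A - X) + (B - (X - A))"
  proof (rule multiset_eqI)
    show "count Y y = count ((A - X) + (B - (X - A))) y" for y using count[of y] by simp
  qed
qed

lemma subseteq_add_mset_cases:
  assumes "R \<subseteq># add_mset x M"
  shows "R \<subseteq># M \<or> (\<exists>R'. R = add_mset x R' \<and> R' \<subseteq># M)"
proof (cases "x \<in># R")
  case True
  then obtain R' where "R = add_mset x R'" by (metis multi_member_split)
  then show ?thesis using assms by auto
next
  case False
  then have "count R y \<le> count M y" for y
    using mset_subset_eq_count[OF assms, of y] by (cases "y = x") (auto simp: not_in_iff)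
  then show ?thesis by (simp add: subseteq_mset_def)
qed

lemma subseteq_union_disjoint:
  assumes "S \<subseteq># A + B" "set_mset S \<inter> set_mset A = {}"
  shows "S \<subseteq># B"
proof -
  have "count S y \<le> count B y" for y
  proof -
    have "count S y = 0 \<or> count A y = 0" using assms(2) by (auto simp: not_in_iff)
    then show ?thesis using mset_subset_eq_count[OF assms(1), of y] by auto
  qed
  then show ?thesis by (simp add: subseteq_mset_def)
qed

lemma union_subseteq_disjoint:
  assumes "S \<subseteq># U" "T \<subseteq># U" "set_mset S \<inter> set_mset T = {}"
  shows "S + T \<subseteq># U"
proof -
  have "count S y + count T y \<le> count U y" for y
  proof -
    have "count S y = 0 \<or> count T y = 0" using assms(3) by (auto simp: not_in_iff)
    then show ?thesis
      using mset_subset_eq_count[OF assms(1), of y] mset_subset_eq_count[OF assms(2), of y] by auto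
  qed
  then show ?thesis by (simp add: subseteq_mset_def)
qed

lemma subseteq_add_msetI: "R \<subseteq># V \<Longrightarrow> R \<subseteq># add_mset x V"
  by (metis add_mset_add_single mset_subset_eq_add_left subset_mset.order_trans)

lemma three_complements_union:
  assumes "S1 + S2 + S3 = U" "T1 + T2 + T3 = U"
    and "S1 + T1 \<subseteq># U" "S2 + T2 \<subseteq># U" "S3 + T3 \<subseteq># U"
  shows "(U - (S1 + T1)) + (U - (S2 + T2)) + (U - (S3 + T3)) = U"
proof (rule multiset_eqI)
  fix y
  have "count S1 y + count S2 y + count S3 y = count U y"
    "count T1 y + count T2 y + count T3 y = count U y"
    using arg_cong[OF assms(1), of "\<lambda>M. count M y"] arg_cong[OF assms(2), of "\<lambda>M. count M y"]
    by simp_all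
  moreover have "count S1 y + count T1 y \<le> count U y" "count S2 y + count T2 y \<le> count U y"
    "count S3 y + count T3 y \<le> count U y"
    using assms(3-5) by (metis count_union mset_subset_eq_count)+
  ultimately show "count ((U - (S1 + T1)) + (U - (S2 + T2)) + (U - (S3 + T3))) y = count U y"
    by simp
qed

lemma subseteq_size_eq: "A \<subseteq># B \<Longrightarrow> size A = size B \<Longrightarrow> A = B"
  using mset_subset_size subset_mset.le_less by fastforce

text \<open>A subgroup \<open>K \<supseteq> 2G\<close>, so that \<open>G/K\<close> is an elementary abelian 2-group; \<open>zero_sum_free_mod V\<close>
  says that the image of \<open>V\<close> in \<open>G/K\<close> is zero-sum free, and \<open>subsums_mod V\<close> is the preimage of
  its set of subsums.\<close>

locale doubling_subgroup =
  fixes K :: "'a::ab_group_add set"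
  assumes zero_mem: "0 \<in> K"
    and diff_mem: "a \<in> K \<Longrightarrow> b \<in> K \<Longrightarrow> a - b \<in> K"
    and double_mem: "g + g \<in> K"
begin

lemma add_mem: "a \<in> K \<Longrightarrow> b \<in> K \<Longrightarrow> a + b \<in> K"
  using diff_mem[of a "0 - b"] diff_mem[OF zero_mem, of b] by simp

definition zero_sum_free_mod :: "'a multiset \<Rightarrow> bool" where
  "zero_sum_free_mod V \<longleftrightarrow> (\<forall>R. R \<subseteq># V \<longrightarrow> R \<noteq> {#} \<longrightarrow> sum_mset R \<notin> K)"

definition subsums_mod :: "'a multiset \<Rightarrow> 'a set" where
  "subsums_mod V = {sum_mset R + k | R k. R \<subseteq># V \<and> k \<in> K}"

lemma zero_sum_free_mod_add_mset: "zero_sum_free_mod (add_mset x V) \<Longrightarrow> zero_sum_free_mod V"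
  unfolding zero_sum_free_mod_def by (meson subseteq_add_msetI)

lemma subsums_mod_empty: "subsums_mod {#} = K"
  unfolding subsums_mod_def by auto

lemma subsums_mod_add_mset:
  "subsums_mod (add_mset x V) = subsums_mod V \<union> (\<lambda>a. x + a) ` subsums_mod V"
proof (intro equalityI subsetI)
  fix a assume "a \<in> subsums_mod (add_mset x V)"
  then obtain R k where a: "a = sum_mset R + k" "R \<subseteq># add_mset x V" "k \<in> K"
    unfolding subsums_mod_def by blast
  from subseteq_add_mset_cases[OF a(2)]
  show "a \<in> subsums_mod V \<union> (\<lambda>a. x + a) ` subsums_mod V"
  proof (elim disjE exE conjE)
    assume "R \<subseteq># V"
    then show ?thesis using a unfolding subsums_mod_def by blast
  next
    fix R' assume "R = add_mset x R'" "R' \<subseteq># V"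
    then have "a = x + (sum_mset R' + k)" by (simp add: a add.assoc)
    moreover have "sum_mset R' + k \<in> subsums_mod V"
      using \<open>R' \<subseteq># V\<close> a(3) unfolding subsums_mod_def by blast
    ultimately show ?thesis by blast
  qed
next
  fix a assume "a \<in> subsums_mod V \<union> (\<lambda>a. x + a) ` subsums_mod V"
  then show "a \<in> subsums_mod (add_mset x V)"
  proof
    assume "a \<in> subsums_mod V"
    then show ?thesis unfolding subsums_mod_def by (auto intro: subseteq_add_msetI)
  next
    assume "a \<in> (\<lambda>a. x + a) ` subsums_mod V"
    then obtain R k where "a = x + (sum_mset R + k)" "R \<subseteq># V" "k \<in> K"
      unfolding subsums_mod_def by blast
    then have "a = sum_mset (add_mset x R) + k" "add_mset x R \<subseteq># add_mset x V" "k \<in> K"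
      by (simp_all add: add.assoc)
    then show ?thesis unfolding subsums_mod_def by blast
  qed
qed

text \<open>If two subsums meet, \<open>x\<close> together with the symmetric difference of the two
  subsequences has sum \<open>2\<sigma>(R\<^sub>1 - R\<^sub>2) + k\<^sub>1 - k\<^sub>2 \<in> K\<close>.\<close>

lemma subsums_mod_disjoint:
  assumes "zero_sum_free_mod (add_mset x V)"
  shows "subsums_mod V \<inter> (\<lambda>a. x + a) ` subsums_mod V = {}"
proof (rule ccontr)
  assume "subsums_mod V \<inter> (\<lambda>a. x + a) ` subsums_mod V \<noteq> {}"
  then obtain R1 k1 R2 k2 where eq: "sum_mset R1 + k1 = x + (sum_mset R2 + k2)"
    and R: "R1 \<subseteq># V" "R2 \<subseteq># V" and k: "k1 \<in> K" "k2 \<in> K"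
    unfolding subsums_mod_def by blast
  define D1 where "D1 = R1 - R2"
  define D2 where "D2 = R2 - R1"
  have R1: "R1 = (R1 \<inter># R2) + D1" and R2: "R2 = (R1 \<inter># R2) + D2"
    unfolding D1_def D2_def by (rule multiset_eqI; simp)+
  have "D1 + D2 \<subseteq># V"
  proof -
    have "count (D1 + D2) y \<le> count V y" for y
      using mset_subset_eq_count[OF R(1), of y] mset_subset_eq_count[OF R(2), of y]
      by (simp add: D1_def D2_def)
    then show ?thesis by (simp add: subseteq_mset_def)
  qed
  then have sub: "add_mset x (D1 + D2) \<subseteq># add_mset x V" by simp
  from eq have "sum_mset D1 + k1 = x + (sum_mset D2 + k2)"
    by (subst (asm) R1, subst (asm) R2) (simp add: algebra_simps)
  then have "sum_mset (add_mset x (D1 + D2)) = (sum_mset D1 + sum_mset D1) + (k1 - k2)"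
    by (simp add: algebra_simps)
  also have "\<dots> \<in> K" by (rule add_mem[OF double_mem diff_mem[OF k]])
  finally show False
    using assms[unfolded zero_sum_free_mod_def, rule_format, OF sub] by simp
qed

lemma finite_subsums_mod: "finite K \<Longrightarrow> finite (subsums_mod V)"
  by (induction V) (simp_all add: subsums_mod_empty subsums_mod_add_mset)

lemma card_subsums_mod:
  assumes "finite K" "zero_sum_free_mod V"
  shows "card (subsums_mod V) = 2 ^ size V * card K"
  using assms(2)
proof (induction V)
  case empty
  then show ?case by (simp add: subsums_mod_empty)
next
  case (add x V)
  have "card (subsums_mod (add_mset x V)) =
      card (subsums_mod V) + card ((\<lambda>a. x + a) ` subsums_mod V)"
    unfolding subsums_mod_add_mset
    using subsums_mod_disjoint[OF add.prems] finite_subsums_mod[OF assms(1)]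
    by (simp add: card_Un_disjoint)
  also have "card ((\<lambda>a. x + a) ` subsums_mod V) = card (subsums_mod V)"
    by (rule card_image) (simp add: inj_on_def)
  finally show ?case using add zero_sum_free_mod_add_mset by simp
qed

lemma zero_sum_free_mod_size_bound:
  assumes "finite (UNIV :: 'a set)" "zero_sum_free_mod V"
  shows "2 ^ size V * card K \<le> card (UNIV :: 'a set)"
proof -
  have "card (subsums_mod V) \<le> card (UNIV :: 'a set)" by (rule card_mono[OF assms(1)]) simp
  then show ?thesis using card_subsums_mod[OF finite_subset[OF _ assms(1)] assms(2)] by simp
qed

end

definition three_atom_split :: "'a::ab_group_add multiset \<Rightarrow> 'a multiset \<Rightarrow> 'a multiset \<Rightarrow>
    'a multiset \<Rightarrow> 'a multiset \<Rightarrow> 'a multiset \<Rightarrow> 'a multiset \<Rightarrow> bool" where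
  "three_atom_split U S1 S2 S3 T1 T2 T3 \<longleftrightarrow> atom U \<and>
     atom (S1 + neg_seq T1) \<and> atom (S2 + neg_seq T2) \<and> atom (S3 + neg_seq T3) \<and>
     S1 + S2 + S3 = U \<and> T1 + T2 + T3 = U"

lemma three_atom_split_rotate:
  "three_atom_split U S1 S2 S3 T1 T2 T3 \<Longrightarrow> three_atom_split U S2 S3 S1 T2 T3 T1"
  unfolding three_atom_split_def by (simp add: ac_simps)

lemma three_atom_split_swap:
  "three_atom_split U S1 S2 S3 T1 T2 T3 \<Longrightarrow> three_atom_split U S2 S1 S3 T2 T1 T3"
  unfolding three_atom_split_def by (simp add: ac_simps)

lemma three_atom_split_flip:
  "three_atom_split U S1 S2 S3 T1 T2 T3 \<Longrightarrow> three_atom_split U T1 T2 T3 S1 S2 S3"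
  unfolding three_atom_split_def
  by (metis atom_neg_seq neg_seq_union neg_seq_neg_seq add.commute)

lemma three_atom_split_sum_eq:
  "three_atom_split U S1 S2 S3 T1 T2 T3 \<Longrightarrow> sum_mset S1 = sum_mset T1"
  unfolding three_atom_split_def by (auto dest!: atom_zero_sum simp: zero_sum_def)

lemma lengths_three_atom_split:
  assumes "atom U" "3 \<in> lengths (U + neg_seq U)"
  obtains S1 S2 S3 T1 T2 T3 where "three_atom_split U S1 S2 S3 T1 T2 T3"
proof -
  obtain F where F: "\<forall>W\<in>#F. atom W" "sum_mset F = U + neg_seq U" "size F = 3"
    using assms(2) unfolding lengths_def by blast
  obtain xs where "F = mset xs" by (metis ex_mset)
  moreover from this have "length xs = 3" using F(3) by simp
  ultimately obtain W1 W2 W3 where "F = {#W1, W2, W3#}"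
    by (auto simp: numeral_3_eq_3 length_Suc_conv)
  then have atoms: "atom W1" "atom W2" "atom W3" and split: "W1 + (W2 + W3) = U + neg_seq U"
    using F by (auto simp: ac_simps)
  from split obtain S1 Y1 X Y where
    W1: "W1 = S1 + Y1" and W23: "W2 + W3 = X + Y" and U: "U = S1 + X" and "neg_seq U = Y1 + Y"
    by (rule union_eq_union_decompose)
  obtain S2 Y2 S3 Y3 where "W2 = S2 + Y2" "W3 = S3 + Y3" "X = S2 + S3" "Y = Y2 + Y3"
    using W23 by (rule union_eq_union_decompose)
  moreover have "neg_seq Y1 + neg_seq Y2 + neg_seq Y3 = neg_seq (neg_seq U)"
    unfolding \<open>neg_seq U = Y1 + Y\<close> \<open>Y = Y2 + Y3\<close> by (simp add: neg_seq_union add.assoc)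
  ultimately have "three_atom_split U S1 S2 S3 (neg_seq Y1) (neg_seq Y2) (neg_seq Y3)"
    using assms(1) atoms W1 U unfolding three_atom_split_def by (auto simp: add.assoc)
  then show ?thesis by (rule that)
qed

lemma three_atom_split_nonempty:
  assumes "three_atom_split U S1 S2 S3 T1 T2 T3"
  shows "S1 \<noteq> {#}"
proof
  assume "S1 = {#}"
  note split = assms[unfolded three_atom_split_def]
  have "atom U" using split by blast
  have W1: "atom (neg_seq T1)" and U: "U = S2 + S3" using split \<open>S1 = {#}\<close> by auto
  have "T1 \<subseteq># U" using split mset_subset_eq_add_left[of T1 "T2 + T3"] by (simp add: add.assoc)
  then have "T1 = U"
    using atom_zero_sum_subseteq[OF \<open>atom U\<close>] atom_zero_sum[OF W1] atom_nonempty[OF W1]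
    by (simp add: zero_sum_def)
  then have "T2 = {#}" "T3 = {#}" using split by auto
  then have "atom S2" "atom S3" using split by (simp_all add: neg_seq_def)
  then show False using atom_split_trivial[OF _ U] split atom_zero_sum atom_nonempty by blast
qed

lemma three_atom_split_all_nonempty:
  assumes "three_atom_split U S1 S2 S3 T1 T2 T3"
  shows "S1 \<noteq> {#}" "S2 \<noteq> {#}" "S3 \<noteq> {#}" "T1 \<noteq> {#}" "T2 \<noteq> {#}" "T3 \<noteq> {#}"
proof -
  have rotations: "three_atom_split U S2 S3 S1 T2 T3 T1" "three_atom_split U S3 S1 S2 T3 T1 T2"
    using three_atom_split_rotate assms by blast+
  show "S1 \<noteq> {#}" "S2 \<noteq> {#}" "S3 \<noteq> {#}" "T1 \<noteq> {#}" "T2 \<noteq> {#}" "T3 \<noteq> {#}"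
    using assms rotations by (metis three_atom_split_nonempty three_atom_split_flip)+
qed

lemma three_atom_split_not_complementary:
  assumes "three_atom_split U S1 S2 S3 T1 T2 T3"
  shows "S3 + T3 \<noteq> U"
proof
  assume complement: "S3 + T3 = U"
  note split = assms[unfolded three_atom_split_def]
  have "S1 + S2 + S3 = T3 + S3" "T1 + T2 + T3 = S3 + T3"
    using split complement by (simp_all add: add.commute)
  then have "S1 + S2 = T3" "T1 + T2 = S3" by simp_all
  then have "S3 + neg_seq T3 = (T1 + neg_seq S1) + (T2 + neg_seq S2)"
    by (auto simp: neg_seq_union ac_simps)
  moreover have "zero_sum (T1 + neg_seq S1)" "zero_sum (T2 + neg_seq S2)"
    using three_atom_split_sum_eq[OF assms] three_atom_split_sum_eq[OF three_atom_split_swap[OF assms]]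
    by (simp_all add: zero_sum_def)
  ultimately show False
    using atom_split_trivial split three_atom_split_all_nonempty[OF assms] by blast
qed

lemma three_atom_split_two_common_elements:
  assumes "three_atom_split U S1 S2 S3 T1 T2 T3"
    and "x \<in># S3" "x \<in># T3" "y \<in># S1" "y \<in># T1"
  shows "size U = 3"
proof -
  note split = assms(1)[unfolded three_atom_split_def]
  have "S3 = {#x#}" "T3 = {#x#}" "S1 = {#y#}" "T1 = {#y#}"
    using atom_common_element split assms(2-5) by blast+
  then have "S2 = T2" using split by auto
  obtain w where "w \<in># S2" using three_atom_split_all_nonempty[OF assms(1)] by fast
  then have "S2 = {#w#}" using atom_common_element split \<open>S2 = T2\<close> by blast
  then show ?thesis using split \<open>S3 = {#x#}\<close> \<open>S1 = {#y#}\<close> by auto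
qed

lemma three_atom_split_common_element:
  assumes "three_atom_split U S1 S2 S3 T1 T2 T3" "size U \<noteq> 3" "x \<in># S3" "x \<in># T3"
  shows "S3 = {#x#}" "T3 = {#x#}" "S1 = T2" "S2 = T1"
proof -
  note split = assms(1)[unfolded three_atom_split_def]
  show S3: "S3 = {#x#}" and T3: "T3 = {#x#}"
    using atom_common_element split assms(3,4) by blast+
  have "set_mset S1 \<inter> set_mset T1 = {}" "set_mset S2 \<inter> set_mset T2 = {}"
    using three_atom_split_two_common_elements[OF assms(1,3,4)]
      three_atom_split_two_common_elements[OF three_atom_split_swap[OF assms(1)] assms(3,4)] assms(2)
    by blast+
  moreover have "S1 + S2 = T1 + T2" using split S3 T3 by auto
  moreover have "S1 \<subseteq># T1 + T2" "S2 \<subseteq># T2 + T1"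
    by (simp_all flip: \<open>S1 + S2 = T1 + T2\<close> add: add.commute[of T2])
  ultimately have sub: "S1 \<subseteq># T2" "S2 \<subseteq># T1"
    using subseteq_union_disjoint by blast+
  moreover have "size S1 + size S2 = size T1 + size T2"
    using arg_cong[OF \<open>S1 + S2 = T1 + T2\<close>, of size] by simp
  ultimately have "size S1 = size T2" "size S2 = size T1"
    using size_mset_mono[OF sub(1)] size_mset_mono[OF sub(2)] by linarith+
  then show "S1 = T2" "S2 = T1" using sub subseteq_size_eq by blast+
qed

locale doubling_into_order_two =
  fixes z :: "'a::ab_group_add"
  assumes z_nonzero: "z \<noteq> 0"
    and double_cases: "g + g \<in> {0, z}"
begin

lemma z_double: "z + z = 0"
  using double_cases[of z] z_nonzero by auto

lemma uminus_z: "- z = z"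
  using minus_unique[OF z_double] .

sublocale doubling_subgroup "{0, z}"
  by unfold_locales (use z_double uminus_z double_cases in auto)

lemma atom_remove_z_zero_sum_free:
  assumes "atom U" "U = add_mset z (add_mset y V)"
  shows "zero_sum_free_mod V"
  unfolding zero_sum_free_mod_def
proof (intro allI impI)
  fix R assume R: "R \<subseteq># V" "R \<noteq> {#}"
  then have "R \<subseteq># U" "add_mset z R \<subseteq># U"
    using assms(2) by (auto intro: subseteq_add_msetI)
  moreover have "R \<noteq> U" "add_mset z R \<noteq> U"
    using size_mset_mono[OF R(1)] assms(2) by auto
  ultimately have "sum_mset R \<noteq> 0" "sum_mset (add_mset z R) \<noteq> 0"
    using atom_zero_sum_subseteq[OF assms(1)] R(2) by (auto simp: zero_sum_def)
  then show "sum_mset R \<notin> {0, z}" using z_double by (auto simp: add.commute)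
qed

lemma three_atom_split_common_element_zero_sum_free:
  fixes U :: "'a multiset"
  assumes split: "three_atom_split U S1 S2 S3 T1 T2 T3"
    and "size U \<noteq> 3" "x \<in># S3" "x \<in># T3"
  obtains V where "zero_sum_free_mod V" "size V + 2 = size U"
proof -
  note common = three_atom_split_common_element[OF assms]
  have "atom U" using split unfolding three_atom_split_def by blast
  have U: "U = add_mset x (S1 + S2)"
    using split common(1) unfolding three_atom_split_def by auto
  have "sum_mset (S1 + S2) = sum_mset S1 + sum_mset S1"
    using three_atom_split_sum_eq[OF split] common(4) by simp
  then have "sum_mset (S1 + S2) \<in> {0, z}" using double_cases by simp
  moreover have "sum_mset (S1 + S2) \<noteq> 0"
  proof
    assume "sum_mset (S1 + S2) = 0"
    moreover have "S1 + S2 \<subseteq># U" "S1 + S2 \<noteq> {#}"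
      using U three_atom_split_all_nonempty[OF split] by simp_all
    ultimately have "S1 + S2 = U"
      using atom_zero_sum_subseteq[OF \<open>atom U\<close>] by (auto simp: zero_sum_def)
    then show False using U by (metis multi_self_add_other_not_self)
  qed
  ultimately have "sum_mset (S1 + S2) = z" by simp
  moreover have "x + sum_mset (S1 + S2) = 0"
    using atom_zero_sum[OF \<open>atom U\<close>] U by (simp add: zero_sum_def)
  ultimately have "x = - z" by (simp add: eq_neg_iff_add_eq_0)
  then have "x = z" using uminus_z by simp
  obtain y where "y \<in># S1" using three_atom_split_all_nonempty[OF split] by fast
  define V where "V = S1 + S2 - {#y#}"
  have "U = add_mset z (add_mset y V)" using U \<open>x = z\<close> \<open>y \<in># S1\<close> by (simp add: V_def)
  then show ?thesis using that[OF atom_remove_z_zero_sum_free[OF \<open>atom U\<close>]] by simp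
qed

lemma three_atom_split_disjoint_complement:
  assumes split: "three_atom_split U S1 S2 S3 T1 T2 T3"
    and disjoint: "set_mset S3 \<inter> set_mset T3 = {}"
  shows "S3 + T3 \<subseteq># U" "sum_mset (U - (S3 + T3)) = z"
proof -
  note split' = split[unfolded three_atom_split_def]
  have "atom U" using split' by blast
  have "S3 \<subseteq># U" "T3 \<subseteq># U" using split' by (metis mset_subset_eq_add_right)+
  then show sub: "S3 + T3 \<subseteq># U" using disjoint by (rule union_subseteq_disjoint)
  have "sum_mset (S3 + T3) = sum_mset S3 + sum_mset S3"
    using three_atom_split_sum_eq[OF three_atom_split_rotate[OF three_atom_split_rotate[OF split]]]
    by simp
  then have "sum_mset (S3 + T3) \<in> {0, z}" using double_cases by simp
  then have "- sum_mset (S3 + T3) \<in> {0, z}" using diff_mem[OF zero_mem] by (metis diff_0)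
  moreover have "sum_mset (U - (S3 + T3)) = - sum_mset (S3 + T3)"
    using atom_zero_sum[OF \<open>atom U\<close>] sub by (simp add: zero_sum_def sum_mset_diff)
  ultimately have "sum_mset (U - (S3 + T3)) \<in> {0, z}" by (simp only:)
  moreover have "sum_mset (U - (S3 + T3)) \<noteq> 0"
  proof
    assume zero: "sum_mset (U - (S3 + T3)) = 0"
    have "U - (S3 + T3) \<noteq> {#}"
      using subset_mset.add_diff_inverse[OF sub] three_atom_split_not_complementary[OF split] by auto
    have "U - (S3 + T3) \<noteq> U"
    proof
      assume "U - (S3 + T3) = U"
      then have "size U - size (S3 + T3) = size U" using size_Diff_submset[OF sub] by simp
      moreover have "size (S3 + T3) \<le> size U" using size_mset_mono[OF sub] .
      moreover have "size (S3 + T3) \<noteq> 0" using three_atom_split_all_nonempty[OF split] by simp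
      ultimately show False by arith
    qed
    moreover have "U - (S3 + T3) = U"
      by (rule atom_zero_sum_subseteq[OF \<open>atom U\<close>])
        (use zero \<open>U - (S3 + T3) \<noteq> {#}\<close> in \<open>simp_all add: zero_sum_def\<close>)
    ultimately show False by blast
  qed
  ultimately show "sum_mset (U - (S3 + T3)) = z" by blast
qed

lemma three_atom_split_zero_sum_free_subseq:
  fixes U :: "'a multiset"
  assumes split: "three_atom_split U S1 S2 S3 T1 T2 T3" and "size U \<noteq> 3"
  obtains V where "zero_sum_free_mod V" "size V + 2 = size U"
proof -
  have rotated: "three_atom_split U S2 S3 S1 T2 T3 T1" "three_atom_split U S3 S1 S2 T3 T1 T2"
    using three_atom_split_rotate split by blast+
  consider "set_mset S1 \<inter> set_mset T1 = {}" "set_mset S2 \<inter> set_mset T2 = {}"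
      "set_mset S3 \<inter> set_mset T3 = {}"
    | x where "x \<in># S1" "x \<in># T1"
    | x where "x \<in># S2" "x \<in># T2"
    | x where "x \<in># S3" "x \<in># T3"
    by blast
  then show ?thesis
  proof cases
    case 1
    note complement1 = three_atom_split_disjoint_complement[OF rotated(1) 1(1)]
      and complement2 = three_atom_split_disjoint_complement[OF rotated(2) 1(2)]
      and complement3 = three_atom_split_disjoint_complement[OF split 1(3)]
    have "(U - (S1 + T1)) + (U - (S2 + T2)) + (U - (S3 + T3)) = U"
      using split complement1(1) complement2(1) complement3(1)
      unfolding three_atom_split_def by (intro three_complements_union) auto
    then have "sum_mset U = z + z + z"
      using complement1(2) complement2(2) complement3(2) by (metis sum_mset.union)
    also have "\<dots> = z" using z_double by (simp add: add.assoc)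
    finally show ?thesis
      using split z_nonzero atom_zero_sum unfolding three_atom_split_def zero_sum_def by auto
  next
    case 2
    then show ?thesis
      using three_atom_split_common_element_zero_sum_free[OF rotated(1) assms(2)] that by blast
  next
    case 3
    then show ?thesis
      using three_atom_split_common_element_zero_sum_free[OF rotated(2) assms(2)] that by blast
  next
    case 4
    then show ?thesis
      using three_atom_split_common_element_zero_sum_free[OF split assms(2)] that by blast
  qed
qed

end

lemma double_mod2: "(a :: 2) + a = 0"
proof (cases a)
  case (of_int k)
  then have "k = 0 \<or> k = 1" by auto
  then show ?thesis using of_int by (auto simp flip: of_int_add)
qed

lemma double_mod4: "(a :: 4) + a \<in> {0, 2}"
proof (cases a)
  case (of_int k)
  then have "k = 0 \<or> k = 1 \<or> k = 2 \<or> k = 3" by auto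
  then show ?thesis using of_int by (auto simp flip: of_int_add)
qed

interpretation G: doubling_into_order_two "(0, 0, 0, 2) :: G"
proof
  show "(0, 0, 0, 2) \<noteq> (0 :: G)" by (simp add: zero_prod_def)
  fix g :: G
  obtain a b c d where "g = (a, b, c, d)" by (cases g) auto
  then show "g + g \<in> {0, (0, 0, 0, 2)}"
    using double_mod2[of a] double_mod2[of b] double_mod2[of c] double_mod4[of d]
    by (auto simp: zero_prod_def)
qed

theorem lemma5p6:
  fixes U :: "G multiset"
  assumes "atom U" and "size U = 7"
  shows "3 \<notin> lengths (U + neg_seq U)"
proof
  assume "3 \<in> lengths (U + neg_seq U)"
  then obtain S1 S2 S3 T1 T2 T3 where "three_atom_split U S1 S2 S3 T1 T2 T3"
    using lengths_three_atom_split[OF assms(1)] by blast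
  moreover have "size U \<noteq> 3" using assms(2) by simp
  ultimately obtain V where "G.zero_sum_free_mod V" "size V + 2 = size U"
    by (rule G.three_atom_split_zero_sum_free_subseq)
  then have "2 ^ size V * card {0, (0, 0, 0, 2) :: G} \<le> CARD(G)"
    using G.zero_sum_free_mod_size_bound by simp
  then show False using assms(2) \<open>size V + 2 = size U\<close> by (simp add: zero_prod_def)
qed

end
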